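(* Let $\mathcal X$ be the Hawaiian earring with base point $0$. For a loop $h:[0,1]\to\mathcal X$ with $h(0)=h(1)=0$ and $n\in\mathbb N$, let $h^{\{n\}}:[0,1]\to C_n$ be defined by $h^{\{n\}}(x)=h(x)$ if $h(x)\in C_n$ and $h^{\{n\}}(x)=0$ otherwise, and let $A(h)=\{n\in\mathbb N: h^{\{n\}}:[0,1]\to C_n\text{ is not null-homotopic}\}$. Then: (i) if two such loops $f,g$ are homotopic (rel endpoints) in $\mathcal X$, then $A(f)=A(g)$; (ii) $|h^{-1}(0)|\ge|A(h)|$; (iii) if $[f]\in\mathfrak P^\omega(\mathcal X,0)$ then $A(f)$ is finite.
   Context: For $n\in\mathbb N=\{1,2,\dots\}$, $C_n=\{(x,y)\in\mathbb R^2: x^2+(y-\tfrac1n)^2=\tfrac1{n^2}\}$ and the Hawaiian earring is $\mathcal X=\bigcup_{n\in\mathbb N}C_n\subseteq\mathbb R^2$; all $C_n$ pass through $0$. An $\omega$-loop at $0$ is a continuous $k:[0,1]\to\mathcal X$ with $k(0)=k(1)=0$ and $|k^{-1}(x)|$ finite for every $x\in\mathcal X$; $\mathfrak P^\omega(\mathcal X,0)$ is the subgroup of $\pi_1(\mathcal X,0)$ generated by homotopy classes (rel endpoints) of $\omega$-loops at $0$ (it coincides with the set of such classes). *)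

theory Defs
  imports "HOL-Analysis.Analysis"
begin

definition Circ :: "nat \<Rightarrow> (real \<times> real) set" where
  "Circ n = {(x, y). x\<^sup>2 + (y - 1 / real n)\<^sup>2 = 1 / (real n)\<^sup>2}"

definition HE :: "(real \<times> real) set" where
  "HE = (\<Union>n\<in>{1..}. Circ n)"

definition HE_loop :: "(real \<Rightarrow> real \<times> real) \<Rightarrow> bool" where
  "HE_loop h \<longleftrightarrow> path h \<and> path_image h \<subseteq> HE \<and> pathstart h = 0 \<and> pathfinish h = 0"

definition restr :: "nat \<Rightarrow> (real \<Rightarrow> real \<times> real) \<Rightarrow> (real \<Rightarrow> real \<times> real)" where
  "restr n h = (\<lambda>x. if h x \<in> Circ n then h x else 0)"

definition Aset :: "(real \<Rightarrow> real \<times> real) \<Rightarrow> nat set" where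
  "Aset h = {n. n \<ge> 1 \<and> \<not> homotopic_paths (Circ n) (restr n h) (linepath 0 0)}"

definition omega_loop :: "(real \<Rightarrow> real \<times> real) \<Rightarrow> bool" where
  "omega_loop k \<longleftrightarrow> HE_loop k \<and> (\<forall>x\<in>HE. finite {t\<in>{0..1}. k t = x})"

text \<open>Loops whose homotopy class lies in the subgroup of pi_1(HE,0) generated by
  classes of omega-loops: closed under identity, products, inverses and homotopy.\<close>
inductive_set Pomega :: "(real \<Rightarrow> real \<times> real) set" where
  gen: "omega_loop k \<Longrightarrow> k \<in> Pomega"
| unit: "linepath 0 0 \<in> Pomega"
| join: "p \<in> Pomega \<Longrightarrow> q \<in> Pomega \<Longrightarrow> p +++ q \<in> Pomega"
| rev: "p \<in> Pomega \<Longrightarrow> reversepath p \<in> Pomega"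
| htpy: "p \<in> Pomega \<Longrightarrow> homotopic_paths HE p q \<Longrightarrow> q \<in> Pomega"

end

theory Submission
  imports Defs
begin

text \<open>Away from the base point the earring is locally a single circle, so collapsing all
  circles but C_n is a continuous retraction of HE onto C_n; this makes A(h) a homotopy
  invariant. If h^{n} is essential, h must leave 0 along C_n, and the last zero of h before
  such a visit starts an excursion that stays on C_n minus 0. Excursions into different
  circles start at different zeros, which gives the injection of A(h) into the zero set of h.
  For omega-loops the zero set is finite, and A of a product or an inverse is contained in
  the A-sets of the factors, so A is finite on the whole subgroup generated by omega-loops.\<close>

text \<open>For snd p \<noteq> 0 this is the radius of the circle through p tangent to the x-axis at 0,
  so it equals 1/m on C_m minus 0 and is continuous there.\<close>
definition circle_radius :: "real \<times> real \<Rightarrow> real" where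
  "circle_radius p = (fst p ^ 2 + snd p ^ 2) / (2 * snd p)"

lemma Circ_iff:
  assumes "m \<ge> 1"
  shows "p \<in> Circ m \<longleftrightarrow> fst p ^ 2 + snd p ^ 2 = 2 * snd p / real m"
proof -
  obtain x y where p: "p = (x, y)" by fastforce
  have "(y - 1 / real m)^2 = y^2 - 2 * y / real m + 1 / (real m)^2"
    by (simp add: power2_diff power_divide)
  then show ?thesis unfolding p Circ_def by auto
qed

lemma zero_in_Circ [simp]: "0 \<in> Circ m"
  by (simp add: Circ_def zero_prod_def power_divide)

lemma zero_in_HE [simp]: "0 \<in> HE"
  unfolding HE_def by (rule UN_I[of 1]) auto

text \<open>Since 1/0 = 0 in HOL, C_0 degenerates to the base point.\<close>
lemma Circ_0: "Circ 0 = {0}"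
  by (auto simp: Circ_def zero_prod_def)

lemma Circ_index_pos: "p \<in> Circ m \<Longrightarrow> p \<noteq> 0 \<Longrightarrow> m \<ge> 1"
  using Circ_0 by (cases m) auto

lemma HE_obtain_Circ:
  assumes "p \<in> HE"
  obtains m where "p \<in> Circ m"
  using assms unfolding HE_def by auto

lemma Circ_snd_pos:
  assumes "p \<in> Circ m" "p \<noteq> 0"
  shows "snd p > 0"
proof -
  have m: "m \<ge> 1" using assms by (rule Circ_index_pos)
  have "fst p ^ 2 + snd p ^ 2 > 0"
    using assms(2) by (metis prod_eq_iff fst_zero snd_zero sum_power2_gt_zero_iff)
  then have "2 * snd p / real m > 0" using Circ_iff[OF m] assms(1) by simp
  with m show ?thesis by (simp add: zero_less_divide_iff)
qed

lemma circle_radius_Circ: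
  assumes "p \<in> Circ m" "p \<noteq> 0"
  shows "circle_radius p = 1 / real m"
proof -
  have m: "m \<ge> 1" using assms by (rule Circ_index_pos)
  show ?thesis
    using Circ_iff[OF m] Circ_snd_pos[OF assms] assms(1) m
    unfolding circle_radius_def by (simp add: field_simps)
qed

lemma Circ_unique:
  assumes "p \<in> Circ m" "p \<in> Circ n" "p \<noteq> 0"
  shows "m = n"
  using circle_radius_Circ[of p m] circle_radius_Circ[of p n] assms by simp

lemma inverse_nat_separated:
  fixes m n :: nat
  assumes "m \<ge> 1" "\<bar>1 / real n - 1 / real m\<bar> < 1 / (real m * (real m + 1))"
  shows "n = m"
proof (rule ccontr)
  assume "n \<noteq> m"
  then consider "n = 0" | "1 \<le> n" "n < m" | "m + 1 \<le> n" by linarith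
  then show False
  proof cases
    case 1
    have "1 / (real m * (real m + 1)) \<le> 1 / real m"
      using assms(1) by (intro frac_le) auto
    moreover have "\<bar>1 / real n - 1 / real m\<bar> = 1 / real m" using 1 by simp
    ultimately show False using assms(2) by linarith
  next
    case 2
    have "1 / (real m * (real m + 1)) \<le> 1 / (real m * real n)"
      using 2 by (intro frac_le mult_left_mono) auto
    also have "\<dots> \<le> (real m - real n) / (real m * real n)"
      using 2 by (intro divide_right_mono) auto
    also have "\<dots> = 1 / real n - 1 / real m"
      using 2 by (simp add: field_simps)
    finally show False using assms(2) by linarith
  next
    case 3
    have "1 / (real m * (real m + 1)) = 1 / real m - 1 / (real m + 1)"
      using assms(1) by (simp add: field_simps)
    also have "\<dots> \<le> 1 / real m - 1 / real n"
      using 3 assms(1) by (simp add: frac_le)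
    finally show False using assms(2) by linarith
  qed
qed

lemma HE_locally_Circ:
  assumes "p \<in> Circ m" "p \<noteq> 0"
  shows "\<exists>d>0. \<forall>q\<in>HE. dist q p < d \<longrightarrow> q \<in> Circ m \<and> q \<noteq> 0"
proof -
  have m: "m \<ge> 1" using assms by (rule Circ_index_pos)
  have sp: "snd p > 0" using Circ_snd_pos assms by blast
  define g where "g = 1 / (real m * (real m + 1))"
  have "g > 0" using m unfolding g_def by simp
  moreover have "isCont circle_radius p"
    using sp unfolding circle_radius_def by (intro continuous_intros) auto
  ultimately obtain e where e: "e > 0"
    "\<And>q. dist q p < e \<Longrightarrow> dist (circle_radius q) (circle_radius p) < g"
    unfolding continuous_at_eps_delta by blast
  show ?thesis
  proof (intro exI[of _ "min e (snd p)"] conjI ballI impI)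
    show "min e (snd p) > 0" using e sp by simp
    fix q assume q: "q \<in> HE" "dist q p < min e (snd p)"
    have "dist (snd q) (snd p) < snd p" using dist_snd_le[of q p] q by simp
    then show nz: "q \<noteq> 0" by (auto simp: dist_real_def)
    obtain n where n: "q \<in> Circ n" using q(1) HE_obtain_Circ by blast
    have "\<bar>1 / real n - 1 / real m\<bar> < g"
      using e(2)[of q] q circle_radius_Circ[OF n nz] circle_radius_Circ[OF assms]
      by (simp add: dist_real_def)
    then have "n = m" using inverse_nat_separated[OF m] unfolding g_def by blast
    then show "q \<in> Circ m" using n by simp
  qed
qed

lemma connected_punctured_HE_subset_Circ:
  assumes "connected S" "S \<subseteq> HE - {0}" "p \<in> S" "p \<in> Circ n"
  shows "S \<subseteq> Circ n"
proof -
  have "(\<lambda>q. q \<in> Circ n) constant_on S"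
  proof (rule locally_constant_imp_constant[OF assms(1)])
    fix a assume a: "a \<in> S"
    then have a0: "a \<noteq> 0" and "a \<in> HE" using assms(2) by auto
    then obtain m where m: "a \<in> Circ m" using HE_obtain_Circ by blast
    obtain d where d: "d > 0" "\<forall>q\<in>HE. dist q a < d \<longrightarrow> q \<in> Circ m \<and> q \<noteq> 0"
      using HE_locally_Circ[OF m a0] by blast
    have on_Circ_m: "x \<in> Circ n \<longleftrightarrow> n = m" if "x \<in> Circ m" "x \<noteq> 0" for x
      using that Circ_unique[of x m n] by auto
    have "\<forall>q\<in>S \<inter> ball a d. q \<in> Circ n \<longleftrightarrow> a \<in> Circ n"
    proof
      fix q assume q: "q \<in> S \<inter> ball a d"
      have "q \<in> HE" "dist q a < d" using q assms(2) by (auto simp: dist_commute)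
      then have "q \<in> Circ m" "q \<noteq> 0" using d(2) by blast+
      then show "q \<in> Circ n \<longleftrightarrow> a \<in> Circ n" using on_Circ_m m a0 by blast
    qed
    moreover have "openin (top_of_set S) (S \<inter> ball a d)" by (rule openin_open_Int) simp
    moreover have "a \<in> S \<inter> ball a d" using a d(1) by simp
    ultimately show "\<exists>T. openin (top_of_set S) T \<and> a \<in> T \<and> (\<forall>q\<in>T. (q \<in> Circ n) = (a \<in> Circ n))"
      by blast
  qed
  then show ?thesis using assms(3,4) by (auto simp: constant_on_def)
qed

definition Circ_retraction :: "nat \<Rightarrow> real \<times> real \<Rightarrow> real \<times> real" where
  "Circ_retraction n p = (if p \<in> Circ n then p else 0)"

lemma continuous_on_Circ_retraction: "continuous_on HE (Circ_retraction n)"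
  unfolding continuous_on_iff
proof (intro ballI allI impI)
  fix p e assume p: "p \<in> HE" and e: "(e::real) > 0"
  have "\<exists>d>0. \<forall>q\<in>HE. dist q p < d \<longrightarrow> dist (Circ_retraction n q) (Circ_retraction n p) \<le> dist q p"
  proof (cases "p = 0")
    case True
    then show ?thesis by (auto intro!: exI[of _ 1] simp: Circ_retraction_def)
  next
    case False
    obtain m where m: "p \<in> Circ m" using p HE_obtain_Circ by blast
    obtain d where d: "d > 0" "\<forall>q\<in>HE. dist q p < d \<longrightarrow> q \<in> Circ m \<and> q \<noteq> 0"
      using HE_locally_Circ[OF m False] by blast
    have "Circ_retraction n q = (if m = n then q else 0)" if "q \<in> Circ m" "q \<noteq> 0" for q
      using that Circ_unique[of q m n] by (auto simp: Circ_retraction_def)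
    then show ?thesis using d m False by (intro exI[of _ d]) auto
  qed
  then obtain d where "d > 0"
    "\<forall>q\<in>HE. dist q p < d \<longrightarrow> dist (Circ_retraction n q) (Circ_retraction n p) \<le> dist q p"
    by blast
  then show "\<exists>d>0. \<forall>q\<in>HE. dist q p < d \<longrightarrow> dist (Circ_retraction n q) (Circ_retraction n p) < e"
    using e by (intro exI[of _ "min d e"]) force
qed

lemma restr_eq_comp: "restr n h = Circ_retraction n \<circ> h"
  by (auto simp: restr_def Circ_retraction_def)

lemma Aset_homotopic_eq:
  assumes "homotopic_paths HE f g"
  shows "Aset f = Aset g"
proof -
  have "homotopic_paths (Circ n) (restr n f) (restr n g)" for n
    unfolding restr_eq_comp
    by (rule homotopic_paths_continuous_image[OF assms continuous_on_Circ_retraction])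
       (auto simp: Circ_retraction_def)
  then show ?thesis
    unfolding Aset_def by (meson homotopic_paths_trans homotopic_paths_sym)
qed

lemma last_zero_before:
  fixes h :: "real \<Rightarrow> 'a::{t1_space, zero}"
  assumes "continuous_on {0..t} h" "h 0 = 0" "h t \<noteq> 0" "0 \<le> t"
  shows "\<exists>s\<in>{0..<t}. h s = 0 \<and> (\<forall>u\<in>{s<..t}. h u \<noteq> 0)"
proof -
  define K where "K = {u \<in> {0..t}. h u = 0}"
  have "closed K" unfolding K_def
    using assms(1) by (rule continuous_closed_preimage_constant) simp
  moreover have "0 \<in> K" "bdd_above K"
    using assms(2,4) unfolding K_def by (auto intro: bdd_aboveI[of _ t])
  ultimately have "Sup K \<in> K" using closed_contains_Sup by blast
  then have SK: "Sup K \<in> {0..t}" "h (Sup K) = 0" unfolding K_def by auto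
  with assms(3) have "Sup K \<noteq> t" by auto
  with SK have "Sup K \<in> {0..<t}" by simp
  moreover have "h u \<noteq> 0" if "u \<in> {Sup K<..t}" for u
    using that cSup_upper[OF _ \<open>bdd_above K\<close>, of u] \<open>Sup K \<in> K\<close>
    unfolding K_def by fastforce
  ultimately show ?thesis using SK(2) by blast
qed

lemma HE_loop_excursion:
  assumes h: "HE_loop h" and t: "t \<in> {0..1}" "h t \<in> Circ n" "h t \<noteq> 0"
  shows "\<exists>s\<in>{0..<t}. h s = 0 \<and> h ` {s<..t} \<subseteq> Circ n - {0}"
proof -
  have cont: "continuous_on {0..1} h" and "h 0 = 0" and "h ` {0..1} \<subseteq> HE"
    using h unfolding HE_loop_def path_def pathstart_def path_image_def by auto
  moreover have "continuous_on {0..t} h"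
    using cont by (rule continuous_on_subset) (use t(1) in auto)
  ultimately obtain s where s: "s \<in> {0..<t}" "h s = 0" "\<forall>u\<in>{s<..t}. h u \<noteq> 0"
    using last_zero_before[of t h] t by auto
  have "connected (h ` {s<..t})"
    using cont s t(1) by (intro connected_continuous_image continuous_on_subset[OF cont]) auto
  moreover have punct: "h ` {s<..t} \<subseteq> HE - {0}"
    using \<open>h ` {0..1} \<subseteq> HE\<close> s t(1) by auto
  ultimately have "h ` {s<..t} \<subseteq> Circ n"
    using s t by (intro connected_punctured_HE_subset_Circ[of _ "h t"]) auto
  then show ?thesis using s punct by blast
qed

definition visited_circles :: "(real \<Rightarrow> real \<times> real) \<Rightarrow> nat set" where
  "visited_circles h = {n. \<exists>t\<in>{0..1}. h t \<in> Circ n - {0}}"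

lemma Aset_subset_visited_circles: "Aset h \<subseteq> visited_circles h"
proof
  fix n assume n: "n \<in> Aset h"
  show "n \<in> visited_circles h"
  proof (rule ccontr)
    assume "n \<notin> visited_circles h"
    then have "restr n h t = linepath 0 0 t" if "t \<in> {0..1}" for t
      using that by (auto simp: visited_circles_def restr_def linepath_def)
    then have "homotopic_paths (Circ n) (linepath 0 0) (restr n h)"
      by (intro homotopic_paths_eq) auto
    then show False using n unfolding Aset_def by (blast intro: homotopic_paths_sym)
  qed
qed

lemma visited_circles_inj_zeros:
  assumes "HE_loop h"
  shows "\<exists>\<phi> :: nat \<Rightarrow> real.
    inj_on \<phi> (visited_circles h) \<and> \<phi> ` visited_circles h \<subseteq> {t\<in>{0..1}. h t = 0}"
proof -
  define excursion where "excursion n s \<longleftrightarrow>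
    s \<in> {0..1} \<and> h s = 0 \<and> (\<exists>t>s. h ` {s<..t} \<subseteq> Circ n - {0})" for n s
  have "\<exists>s. excursion n s" if n: "n \<in> visited_circles h" for n
  proof -
    obtain t where t: "t \<in> {0..1}" "h t \<in> Circ n" "h t \<noteq> 0"
      using n unfolding visited_circles_def by blast
    then obtain s where "s \<in> {0..<t}" "h s = 0" "h ` {s<..t} \<subseteq> Circ n - {0}"
      using HE_loop_excursion[OF assms t] by blast
    then have "excursion n s" unfolding excursion_def using t(1) by auto
    then show ?thesis ..
  qed
  then obtain \<phi> where \<phi>: "\<And>n. n \<in> visited_circles h \<Longrightarrow> excursion n (\<phi> n)" by metis
  have "inj_on \<phi> (visited_circles h)"
  proof (rule inj_onI)
    \<comment> \<open>two excursions starting at the same zero overlap right after it\<close>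
    fix n n' assume n: "n \<in> visited_circles h" "n' \<in> visited_circles h" "\<phi> n = \<phi> n'"
    obtain t t' where t: "t > \<phi> n" "h ` {\<phi> n<..t} \<subseteq> Circ n - {0}"
      "t' > \<phi> n" "h ` {\<phi> n<..t'} \<subseteq> Circ n' - {0}"
      using \<phi>[OF n(1)] \<phi>[OF n(2)] n(3) unfolding excursion_def by auto
    then have "min t t' \<in> {\<phi> n<..t}" "min t t' \<in> {\<phi> n<..t'}" by auto
    then have "h (min t t') \<in> Circ n" "h (min t t') \<in> Circ n'" "h (min t t') \<noteq> 0"
      using t(2,4) by blast+
    then show "n = n'" by (rule Circ_unique)
  qed
  moreover have "\<phi> ` visited_circles h \<subseteq> {t\<in>{0..1}. h t = 0}"
    using \<phi> unfolding excursion_def by auto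
  ultimately show ?thesis by blast
qed

lemma restr_joinpaths: "restr n (p +++ q) = restr n p +++ restr n q"
  by (auto simp: restr_def joinpaths_def)

lemma restr_reversepath: "restr n (reversepath p) = reversepath (restr n p)"
  by (auto simp: restr_def reversepath_def)

lemma Aset_joinpaths_subset:
  assumes "pathfinish p = pathstart q"
  shows "Aset (p +++ q) \<subseteq> Aset p \<union> Aset q"
proof
  fix n assume n: "n \<in> Aset (p +++ q)"
  show "n \<in> Aset p \<union> Aset q"
  proof (rule ccontr)
    assume "n \<notin> Aset p \<union> Aset q"
    then have "homotopic_paths (Circ n) (restr n p) (linepath 0 0)"
      and "homotopic_paths (Circ n) (restr n q) (linepath 0 0)"
      using n unfolding Aset_def by auto
    moreover have "pathfinish (restr n p) = pathstart (restr n q)"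
      using assms by (simp add: pathfinish_def pathstart_def restr_def)
    ultimately have "homotopic_paths (Circ n) (restr n p +++ restr n q) (linepath 0 0 +++ linepath 0 0)"
      by (rule homotopic_paths_join)
    also have "homotopic_paths (Circ n) (linepath 0 0 +++ linepath 0 0) (linepath (0::real\<times>real) 0)"
      by (rule homotopic_paths_lid') auto
    finally show False using n unfolding Aset_def restr_joinpaths by blast
  qed
qed

lemma Aset_reversepath: "Aset (reversepath p) = Aset p"
proof -
  have "Aset (reversepath q) \<subseteq> Aset q" for q
    unfolding Aset_def restr_reversepath
    using homotopic_paths_reversepath_D[of "Circ _" "restr _ q" "linepath 0 0"] by fastforce
  from this[of p] this[of "reversepath p"] show ?thesis by auto
qed

lemma HE_loop_Pomega: "p \<in> Pomega \<Longrightarrow> HE_loop p"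
proof (induction rule: Pomega.induct)
  case (gen k)
  then show ?case by (simp add: omega_loop_def)
next
  case unit
  show ?case by (simp add: HE_loop_def path_const pathstart_def pathfinish_def)
next
  case (join p q)
  then show ?case by (auto simp: HE_loop_def path_image_join)
next
  case (rev p)
  then show ?case by (simp add: HE_loop_def)
next
  case (htpy p q)
  then show ?case unfolding HE_loop_def
    using homotopic_paths_imp_path homotopic_paths_imp_subset
      homotopic_paths_imp_pathstart homotopic_paths_imp_pathfinish by metis
qed

lemma finite_Aset_omega_loop:
  assumes "omega_loop k"
  shows "finite (Aset k)"
proof -
  have "finite {t\<in>{0..1}. k t = 0}" using assms unfolding omega_loop_def by simp
  moreover obtain \<phi> :: "nat \<Rightarrow> real"
    where "inj_on \<phi> (visited_circles k)" "\<phi> ` visited_circles k \<subseteq> {t\<in>{0..1}. k t = 0}"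
    using assms visited_circles_inj_zeros unfolding omega_loop_def by meson
  ultimately have "finite (visited_circles k)" by (meson finite_subset finite_imageD)
  then show ?thesis by (rule finite_subset[OF Aset_subset_visited_circles])
qed

lemma finite_Aset_Pomega: "p \<in> Pomega \<Longrightarrow> finite (Aset p)"
proof (induction rule: Pomega.induct)
  case (gen k)
  then show ?case by (rule finite_Aset_omega_loop)
next
  case unit
  have "visited_circles (linepath 0 0) = {}" by (simp add: visited_circles_def linepath_refl)
  then show ?case using finite_subset[OF Aset_subset_visited_circles] by (metis finite.emptyI)
next
  case (join p q)
  then have "pathfinish p = pathstart q" using HE_loop_Pomega unfolding HE_loop_def by simp
  then show ?case using join.IH Aset_joinpaths_subset finite_subset by blast
next
  case (rev p)
  then show ?case by (simp add: Aset_reversepath)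
next
  case (htpy p q)
  then show ?case using Aset_homotopic_eq by simp
qed

theorem mainTheorem9:
  shows "(\<forall>f g. HE_loop f \<and> HE_loop g \<and> homotopic_paths HE f g \<longrightarrow> Aset f = Aset g)
       \<and> (\<forall>h. HE_loop h \<longrightarrow>
            (\<exists>\<phi> :: nat \<Rightarrow> real. inj_on \<phi> (Aset h) \<and> \<phi> ` Aset h \<subseteq> {t\<in>{0..1}. h t = 0}))
       \<and> (\<forall>f. HE_loop f \<and> f \<in> Pomega \<longrightarrow> finite (Aset f))"
proof (intro conjI allI impI)
  fix f g assume "HE_loop f \<and> HE_loop g \<and> homotopic_paths HE f g"
  then show "Aset f = Aset g" using Aset_homotopic_eq by simp
next
  fix h assume "HE_loop h"
  then obtain \<phi> :: "nat \<Rightarrow> real" where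
    "inj_on \<phi> (visited_circles h)" "\<phi> ` visited_circles h \<subseteq> {t\<in>{0..1}. h t = 0}"
    using visited_circles_inj_zeros by meson
  then have "inj_on \<phi> (Aset h) \<and> \<phi> ` Aset h \<subseteq> {t\<in>{0..1}. h t = 0}"
    using Aset_subset_visited_circles[of h] by (meson inj_on_subset image_mono order_trans)
  then show "\<exists>\<phi> :: nat \<Rightarrow> real. inj_on \<phi> (Aset h) \<and> \<phi> ` Aset h \<subseteq> {t\<in>{0..1}. h t = 0}" by blast
next
  fix f assume "HE_loop f \<and> f \<in> Pomega"
  then show "finite (Aset f)" using finite_Aset_Pomega by simp
qed

end
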